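(* Let $n\ge2$, $F(a)=\sum_{k=0}^nA_ka^k$ with $A_n=1$, let $x(a)$ be smooth, and set $b_k=\sum_{s=1}^k\frac{F^{(k-s)}}{(k-s)!}\frac{D_a^sx}{(1/2)_s}$ for $k=1,\dots,n$. With $H=\Pi^2+aP_y^2$ one has the identity $$\sum_{k=1}^n b_k\,\Pi^{2k-1}P_y^{2(n-k)+1}=\sum_{k=1}^n\tilde b_k\,H^{n-k}\,\Pi\,P_y^{2k-1},\qquad \tilde b_k=\sum_{s=1}^k\binom{n-s}{k-s}(-a)^{k-s}\,b_{n-s+1}.$$ If moreover $F=\prod_{i=1}^n(a-a_i)$ with distinct real $a_i$ and $x=\sum_{i=1}^n\xi_i\Delta_i^{-1/2}$ with $\Delta_i=\epsilon_i(a-a_i)>0$, $\epsilon_i\in\{\pm1\}$, $\xi_i\in\mathbb{R}$, then for all $k\in\{1,\dots,n\}$ $$\tilde b_k=(-1)^k\sum_{i=1}^n\frac{\xi_i}{\sqrt{\Delta_i}}\,\sigma^i_{k-1}.$$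
   Context: $D_a=d/da$, $F^{(m)}=D_a^mF$; Pochhammer $(z)_0=1$, $(z)_s=z(z+1)\cdots(z+s-1)$. For each $i$, the numbers $\sigma^i_m$ ($-1\le m\le n$) are defined by $\prod_{l\neq i}(a-a_l)=\sum_{m=0}^{n-1}(-1)^m\sigma^i_ma^{n-1-m}$ together with $\sigma^i_{-1}=\sigma^i_n=0$. *)

theory Defs
  imports "HOL-Analysis.Analysis" "HOL-Computational_Algebra.Polynomial"
begin

definition bcoef :: "real poly \<Rightarrow> (real \<Rightarrow> real) \<Rightarrow> nat \<Rightarrow> real \<Rightarrow> real" where
  "bcoef F x k a = (\<Sum>s=1..k. poly ((pderiv ^^ (k - s)) F) a / fact (k - s)
                        * (deriv ^^ s) x a / pochhammer (1/2) s)"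

definition btilde :: "nat \<Rightarrow> real poly \<Rightarrow> (real \<Rightarrow> real) \<Rightarrow> nat \<Rightarrow> real \<Rightarrow> real" where
  "btilde n F x k a = (\<Sum>s=1..k. real ((n - s) choose (k - s)) * (- a) ^ (k - s)
                        * bcoef F x (n - s + 1) a)"

text \<open>sigma n al i m: defined by prod_{l ~= i} (a - a_l) = sum_{m=0}^{n-1} (-1)^m sigma^i_m a^{n-1-m},
  with sigma^i_n = 0 (indices l range over 1..n).\<close>

definition sigma :: "nat \<Rightarrow> (nat \<Rightarrow> real) \<Rightarrow> nat \<Rightarrow> nat \<Rightarrow> real" where
  "sigma n al i m = (if m \<le> n - 1
     then (-1) ^ m * coeff (\<Prod>l\<in>{1..n} - {i}. [:- al l, 1:]) (n - 1 - m) else 0)"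

end

theory Submission
  imports Defs
begin

text \<open>
  Put \<open>U = \<Pi>\<^sup>2\<close>, \<open>V = P\<^sub>y\<^sup>2\<close> and \<open>H = U + a V\<close>. Then
  \<open>\<Pi>\<^bsup>2k-1\<^esup> P\<^sub>y\<^bsup>2(n-k)+1\<^esup> = \<Pi> P\<^sub>y U\<^bsup>k-1\<^esup> V\<^bsup>n-k\<^esup>\<close>; expanding
  \<open>U\<^bsup>n-s\<^esup> = (H - a V)\<^bsup>n-s\<^esup>\<close> binomially and exchanging the two summations gives the
  first identity, which holds for arbitrary coefficients \<open>b\<^sub>k\<close>.

  For the second, \<open>F\<^bsup>(j)\<^esup>(a)/j!\<close> is the \<open>j\<close>-th coefficient of \<open>F(X + a)\<close>, and
  \<open>D\<^sub>a\<^sup>s x / (1/2)\<^sub>s = \<Sum>\<^sub>i \<xi>\<^sub>i \<Delta>\<^sub>i\<^bsup>-1/2\<^esup> (-1/(a - a\<^sub>i))\<^sup>s\<close>. Since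
  \<open>F(X + a) = (X + a - a\<^sub>i) G\<^sub>i(X + a)\<close> with \<open>G\<^sub>i = \<Prod>\<^bsub>l\<noteq>i\<^esub> (X - a\<^sub>l)\<close>, the sum over \<open>s\<close>
  in \<open>b\<^sub>m\<close> divides out the linear factor, leaving
  \<open>b\<^sub>m = - \<Sum>\<^sub>i \<xi>\<^sub>i \<Delta>\<^sub>i\<^bsup>-1/2\<^esup> [X\<^bsup>m-1\<^esup>] G\<^sub>i(X + a)\<close>. The binomial combination defining
  \<open>b\<close>-tilde undoes this Taylor shift and returns \<open>[X\<^bsup>n-k\<^esup>] G\<^sub>i = (-1)\<^bsup>k-1\<^esup> \<sigma>\<^sup>i\<^bsub>k-1\<^esub>\<close>.

  Neither part needs \<open>n \<ge> 2\<close>, the normalisation of \<open>F\<close>, the smoothness hypothesis on \<open>x\<close>,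
  distinctness of the \<open>a\<^sub>i\<close> or \<open>\<epsilon>\<^sub>i = \<plusminus>1\<close>; only \<open>\<epsilon>\<^sub>i (a - a\<^sub>i) > 0\<close> is used.
\<close>

lemma sum_binomial_shift:
  fixes U c :: "'a::comm_ring_1"
  assumes "s \<le> n"
  shows "(\<Sum>k=s..n. of_nat ((n - s) choose (k - s)) * (- c) ^ (k - s) * (U + c) ^ (n - k)) = U ^ (n - s)"
proof -
  have "U ^ (n - s) = (- c + (U + c)) ^ (n - s)"
    by simp
  also have "\<dots> = (\<Sum>p\<le>n - s. of_nat ((n - s) choose p) * (- c) ^ p * (U + c) ^ (n - s - p))"
    by (rule binomial_ring)
  also have "\<dots> = (\<Sum>k=s..n. of_nat ((n - s) choose (k - s)) * (- c) ^ (k - s) * (U + c) ^ (n - k))"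
    by (rule sum.reindex_bij_witness[of _ "\<lambda>k. k - s" "\<lambda>p. p + s"]) (use assms in \<open>auto simp: add.commute\<close>)
  finally show ?thesis ..
qed

lemma sum_triangle_swap:
  fixes f :: "nat \<Rightarrow> nat \<Rightarrow> 'a::comm_monoid_add"
  shows "(\<Sum>k=1..n. \<Sum>s=1..k. f k s) = (\<Sum>s=1..n. \<Sum>k=s..n. f k s)"
proof (induction n)
  case (Suc n)
  have "(\<Sum>s=1..Suc n. \<Sum>k=s..Suc n. f k s) = (\<Sum>s=1..Suc n. (\<Sum>k=s..n. f k s) + f (Suc n) s)"
    by (rule sum.cong) (auto simp: sum.cl_ivl_Suc)
  then show ?case
    using Suc by (simp add: sum.distrib)
qed simp

lemma sum_monomials_change_variable:
  fixes b :: "nat \<Rightarrow> 'a::comm_ring_1"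
  shows "(\<Sum>k=1..n. b k * U ^ (k - 1) * V ^ (n - k))
       = (\<Sum>k=1..n. (\<Sum>s=1..k. of_nat ((n - s) choose (k - s)) * (- a) ^ (k - s) * b (n - s + 1))
                     * (U + a * V) ^ (n - k) * V ^ (k - 1))"
proof -
  have "(\<Sum>k=1..n. (\<Sum>s=1..k. of_nat ((n - s) choose (k - s)) * (- a) ^ (k - s) * b (n - s + 1))
                     * (U + a * V) ^ (n - k) * V ^ (k - 1))
      = (\<Sum>k=1..n. \<Sum>s=1..k. b (n - s + 1) * V ^ (s - 1) *
           (of_nat ((n - s) choose (k - s)) * (- (a * V)) ^ (k - s) * (U + a * V) ^ (n - k)))"
  proof (intro sum.cong refl, unfold sum_distrib_right, intro sum.cong refl)
    fix k s assume "k \<in> {1..n}" "s \<in> {1..k}"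
    then have "V ^ (k - 1) = V ^ (s - 1) * V ^ (k - s)"
      by (simp flip: power_add)
    moreover have "(- (a * V)) ^ (k - s) = (- a) ^ (k - s) * V ^ (k - s)"
      by (metis mult_minus_left power_mult_distrib)
    ultimately show "of_nat ((n - s) choose (k - s)) * (- a) ^ (k - s) * b (n - s + 1) * (U + a * V) ^ (n - k) * V ^ (k - 1)
      = b (n - s + 1) * V ^ (s - 1) * (of_nat ((n - s) choose (k - s)) * (- (a * V)) ^ (k - s) * (U + a * V) ^ (n - k))"
      by (simp only: mult_ac)
  qed
  also have "\<dots> = (\<Sum>s=1..n. \<Sum>k=s..n. b (n - s + 1) * V ^ (s - 1) *
           (of_nat ((n - s) choose (k - s)) * (- (a * V)) ^ (k - s) * (U + a * V) ^ (n - k)))"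
    by (rule sum_triangle_swap)
  also have "\<dots> = (\<Sum>s=1..n. b (n - s + 1) * V ^ (s - 1) * U ^ (n - s))"
    by (intro sum.cong refl) (simp add: sum_binomial_shift flip: sum_distrib_left)
  also have "\<dots> = (\<Sum>k=1..n. b k * U ^ (k - 1) * V ^ (n - k))"
    by (rule sum.reindex_bij_witness[of _ "\<lambda>k. n + 1 - k" "\<lambda>s. n + 1 - s"]) (auto simp: Suc_diff_le)
  finally show ?thesis ..
qed

lemma sum_odd_powers_eq_sum_shifted_square_powers:
  fixes b :: "nat \<Rightarrow> 'a::comm_ring_1"
  shows "(\<Sum>k=1..n. b k * X ^ (2*k - 1) * Y ^ (2*(n - k) + 1))
       = (\<Sum>k=1..n. (\<Sum>s=1..k. of_nat ((n - s) choose (k - s)) * (- a) ^ (k - s) * b (n - s + 1))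
             * (X\<^sup>2 + a * Y\<^sup>2) ^ (n - k) * X * Y ^ (2*k - 1))"
    (is "_ = (\<Sum>k=1..n. ?c k * ?H ^ (n - k) * X * Y ^ (2*k - 1))")
proof -
  have odd_power': "z ^ (2*m + 1) = z * (z\<^sup>2) ^ m" for z :: 'a and m
    by (simp add: power_mult)
  have odd_power: "z ^ (2*k - 1) = z * (z\<^sup>2) ^ (k - 1)" if "k \<in> {1..n}" for z :: 'a and k
  proof -
    have "2*k - 1 = 2*(k - 1) + 1"
      using that by auto
    then show ?thesis
      by (simp only: odd_power')
  qed
  have "(\<Sum>k=1..n. b k * X ^ (2*k - 1) * Y ^ (2*(n - k) + 1))
      = (\<Sum>k=1..n. X * Y * (b k * (X\<^sup>2) ^ (k - 1) * (Y\<^sup>2) ^ (n - k)))"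
    by (intro sum.cong refl) (simp only: odd_power odd_power', simp only: mult_ac)
  also have "\<dots> = X * Y * (\<Sum>k=1..n. ?c k * ?H ^ (n - k) * (Y\<^sup>2) ^ (k - 1))"
    unfolding sum_distrib_left[symmetric] by (subst sum_monomials_change_variable) (rule refl)
  also have "\<dots> = (\<Sum>k=1..n. ?c k * ?H ^ (n - k) * X * Y ^ (2*k - 1))"
    unfolding sum_distrib_left by (intro sum.cong refl) (simp only: odd_power, simp only: mult_ac)
  finally show ?thesis .
qed

lemma higher_pderiv_pcompose_linear:
  "(pderiv ^^ j) (p \<circ>\<^sub>p [:c, 1:]) = (pderiv ^^ j) p \<circ>\<^sub>p [:c, 1:]"
  by (induction j) (simp_all add: pderiv_pcompose pderiv_pCons)

lemma coeff_pcompose_linear: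
  fixes p :: "'a::field_char_0 poly"
  shows "coeff (p \<circ>\<^sub>p [:c, 1:]) j = poly ((pderiv ^^ j) p) c / fact j"
proof -
  have "poly ((pderiv ^^ j) p) c = coeff ((pderiv ^^ j) (p \<circ>\<^sub>p [:c, 1:])) 0"
    by (simp add: higher_pderiv_pcompose_linear poly_pcompose flip: poly_0_coeff_0)
  also have "\<dots> = fact j * coeff (p \<circ>\<^sub>p [:c, 1:]) j"
    by (simp add: coeff_higher_pderiv pochhammer_fact)
  finally show ?thesis
    by simp
qed

lemma coeff_pcompose_linear_sum:
  fixes p :: "'a::field_char_0 poly"
  assumes "degree p \<le> m + N"
  shows "coeff (p \<circ>\<^sub>p [:c, 1:]) m = (\<Sum>i\<le>N. of_nat ((i + m) choose m) * coeff p (i + m) * c ^ i)"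
proof -
  have "degree ((pderiv ^^ m) p) \<le> N"
    using assms by (simp add: degree_higher_pderiv)
  then have "poly ((pderiv ^^ m) p) c = (\<Sum>i\<le>N. coeff ((pderiv ^^ m) p) i * c ^ i)"
    unfolding poly_altdef by (intro sum.mono_neutral_left) (auto simp: coeff_eq_0)
  also have "\<dots> = (\<Sum>i\<le>N. fact m * (of_nat ((i + m) choose m) * coeff p (i + m) * c ^ i))"
  proof (intro sum.cong refl)
    fix i
    have "pochhammer (of_nat (Suc i)) m = fact m * (of_nat ((i + m) choose m) :: 'a)"
      by (simp add: binomial_gbinomial gbinomial_pochhammer' of_nat_diff) (simp add: add.commute)
    then show "coeff ((pderiv ^^ m) p) i * c ^ i = fact m * (of_nat ((i + m) choose m) * coeff p (i + m) * c ^ i)"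
      by (simp add: coeff_higher_pderiv mult_ac)
  qed
  finally show ?thesis
    by (simp add: coeff_pcompose_linear flip: sum_distrib_left)
qed

lemma coeff_eq_sum_coeff_pcompose_linear:
  fixes p :: "'a::field_char_0 poly"
  assumes "degree p \<le> n - 1" "1 \<le> k" "k \<le> n"
  shows "coeff p (n - k)
    = (\<Sum>s=1..k. of_nat ((n - s) choose (k - s)) * (- c) ^ (k - s) * coeff (p \<circ>\<^sub>p [:c, 1:]) (n - s))"
proof -
  define q where "q = p \<circ>\<^sub>p [:c, 1:]"
  have "[:c, 1:] \<circ>\<^sub>p [:- c, 1:] = [:0, 1 :: 'a:]"
    by (simp add: pcompose_pCons)
  then have p_eq: "p = q \<circ>\<^sub>p [:- c, 1:]"
    by (simp add: q_def flip: pcompose_assoc)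
  have "degree q \<le> (n - k) + (k - 1)"
    using assms by (simp add: q_def degree_pcompose)
  then have "coeff p (n - k)
      = (\<Sum>i\<le>k - 1. of_nat ((i + (n - k)) choose (n - k)) * coeff q (i + (n - k)) * (- c) ^ i)"
    by (subst p_eq) (rule coeff_pcompose_linear_sum)
  also have "\<dots> = (\<Sum>s=1..k. of_nat ((n - s) choose (k - s)) * (- c) ^ (k - s) * coeff q (n - s))"
  proof (rule sum.reindex_bij_witness[of _ "\<lambda>s. k - s" "\<lambda>i. k - i"])
    fix i assume "i \<in> {..k - 1}"
    then have i: "k - (k - i) = i" "n - (k - i) = i + (n - k)"
      using assms by auto
    have "(i + (n - k)) choose i = (i + (n - k)) choose (n - k)"
      by (subst binomial_symmetric) auto
    then show "of_nat ((n - (k - i)) choose (k - (k - i))) * (- c) ^ (k - (k - i)) * coeff q (n - (k - i))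
        = of_nat ((i + (n - k)) choose (n - k)) * coeff q (i + (n - k)) * (- c) ^ i"
      unfolding i by (simp add: mult_ac)
  qed (use assms in auto)
  finally show ?thesis
    by (simp add: q_def)
qed

text \<open>The \<open>(-1/d)\<^sup>s\<close> are the coefficients of \<open>d / (X + d)\<close>, so the sum is the \<open>k\<close>-th
  coefficient of \<open>(X + d) q \<cdot> d / (X + d)\<close>.\<close>

lemma sum_coeff_linear_mult_powers:
  fixes q :: "'a::field poly"
  assumes "d \<noteq> 0"
  shows "(\<Sum>s\<le>k. coeff ([:d, 1:] * q) (k - s) * (- 1 / d) ^ s) = d * coeff q k"
proof (induction k)
  case 0
  show ?case
    by (simp add: mult_pCons_left)
next
  case (Suc k)
  have "(\<Sum>s\<le>Suc k. coeff ([:d, 1:] * q) (Suc k - s) * (- 1 / d) ^ s)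
      = coeff ([:d, 1:] * q) (Suc k) + (- 1 / d) * (\<Sum>s\<le>k. coeff ([:d, 1:] * q) (k - s) * (- 1 / d) ^ s)"
    by (simp only: sum.atMost_Suc_shift diff_Suc_Suc power_Suc diff_zero power_0 mult_1_right)
       (simp add: sum_distrib_left mult_ac)
  also have "\<dots> = d * coeff q (Suc k)"
    using Suc assms by (simp add: field_simps mult_pCons_left)
  finally show ?case .
qed

lemma sum_coeff_linear_mult_inverse_powers:
  fixes q :: "'a::field poly"
  assumes "d \<noteq> 0" "1 \<le> m"
  shows "(\<Sum>s=1..m. coeff ([:d, 1:] * q) (m - s) * (- 1 / d) ^ s) = - coeff q (m - 1)"
proof -
  obtain k where m: "m = Suc k"
    using assms(2) by (cases m) auto
  have "(\<Sum>s=1..m. coeff ([:d, 1:] * q) (m - s) * (- 1 / d) ^ s)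
      = (\<Sum>s\<le>k. coeff ([:d, 1:] * q) (k - s) * (- 1 / d) ^ Suc s)"
    unfolding m by (simp only: One_nat_def sum.shift_bounds_cl_Suc_ivl atLeast0AtMost diff_Suc_Suc)
  also have "\<dots> = (- 1 / d) * (\<Sum>s\<le>k. coeff ([:d, 1:] * q) (k - s) * (- 1 / d) ^ s)"
    by (simp add: sum_distrib_left mult_ac)
  also have "\<dots> = - coeff q (m - 1)"
    unfolding sum_coeff_linear_mult_powers[OF assms(1)] using assms(1) m by simp
  finally show ?thesis .
qed

lemma higher_deriv_eq_on_open:
  fixes f :: "'a::real_normed_field \<Rightarrow> 'a"
  assumes "open S" "t \<in> S"
    and "\<And>t. t \<in> S \<Longrightarrow> f t = g 0 t"
    and "\<And>s t. t \<in> S \<Longrightarrow> (g s has_field_derivative g (Suc s) t) (at t)"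
  shows "(deriv ^^ s) f t = g s t"
  using assms(2)
proof (induction s arbitrary: t)
  case 0
  then show ?case
    using assms(3) by simp
next
  case (Suc s)
  have "((deriv ^^ s) f has_field_derivative g (Suc s) t) (at t)"
  proof (rule has_field_derivative_transform_within_open)
    show "(g s has_field_derivative g (Suc s) t) (at t)"
      using assms(4) Suc.prems .
    show "g s u = (deriv ^^ s) f u" if "u \<in> S" for u
      using Suc.IH[OF that] by simp
  qed (use assms(1) Suc.prems in auto)
  then show ?case
    by (simp add: DERIV_imp_deriv)
qed

lemma higher_deriv_sum_inverse_sqrt:
  fixes xi eps al :: "nat \<Rightarrow> real"
  assumes "finite I" and pos: "\<forall>i\<in>I. 0 < eps i * (t - al i)"
  shows "(deriv ^^ s) (\<lambda>t. \<Sum>i\<in>I. xi i / sqrt (eps i * (t - al i))) t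
       = pochhammer (1/2) s * (\<Sum>i\<in>I. xi i / sqrt (eps i * (t - al i)) * (- 1 / (t - al i)) ^ s)"
proof -
  define S where "S = (\<Inter>i\<in>I. {t. 0 < eps i * (t - al i)})"
  define g where "g s t = (\<Sum>i\<in>I. xi i * ((-1) ^ s * pochhammer (1/2) s * eps i ^ s)
                              * (eps i * (t - al i)) powr (- (1/2) - real s))" for s t
  have "open S"
    unfolding S_def using \<open>finite I\<close>
    by (intro open_INT ballI open_Collect_less continuous_intros)
  have "t \<in> S"
    using pos by (simp add: S_def)
  have g_deriv: "(g s has_real_derivative g (Suc s) u) (at u)" if "u \<in> S" for s u
  proof -
    have "(g s has_real_derivative
            (\<Sum>i\<in>I. xi i * ((-1) ^ s * pochhammer (1/2) s * eps i ^ s)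
                * ((- (1/2) - real s) * (eps i * (u - al i)) powr (- (1/2) - real s - of_nat 1) * eps i))) (at u)"
      unfolding g_def
    proof (intro DERIV_sum DERIV_cmult DERIV_fun_powr)
      fix i assume "i \<in> I"
      show "((\<lambda>t. eps i * (t - al i)) has_real_derivative eps i) (at u)"
        by (auto intro!: derivative_eq_intros)
      show "0 < eps i * (u - al i)"
        using that \<open>i \<in> I\<close> by (simp add: S_def)
    qed
    also have "(\<Sum>i\<in>I. xi i * ((-1) ^ s * pochhammer (1/2) s * eps i ^ s)
                * ((- (1/2) - real s) * (eps i * (u - al i)) powr (- (1/2) - real s - of_nat 1) * eps i))
        = g (Suc s) u"
      unfolding g_def
    proof (intro sum.cong refl)
      fix i
      have "- (1/2) - real s - of_nat 1 = - (1/2) - real (Suc s)"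
        by simp
      then show "xi i * ((-1) ^ s * pochhammer (1/2) s * eps i ^ s)
                * ((- (1/2) - real s) * (eps i * (u - al i)) powr (- (1/2) - real s - of_nat 1) * eps i)
          = xi i * ((-1) ^ Suc s * pochhammer (1/2) (Suc s) * eps i ^ Suc s)
                * (eps i * (u - al i)) powr (- (1/2) - real (Suc s))"
        by (simp only:) (simp add: pochhammer_Suc algebra_simps)
    qed
    finally show ?thesis .
  qed
  have g_0: "(\<Sum>i\<in>I. xi i / sqrt (eps i * (u - al i))) = g 0 u" if "u \<in> S" for u
    unfolding g_def
  proof (intro sum.cong refl)
    fix i assume "i \<in> I"
    then have "0 < eps i * (u - al i)"
      using that by (simp add: S_def)
    then show "xi i / sqrt (eps i * (u - al i))
        = xi i * ((-1) ^ 0 * pochhammer (1/2) 0 * eps i ^ 0) * (eps i * (u - al i)) powr (- (1/2) - real 0)"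
      by (simp add: powr_minus_divide powr_half_sqrt)
  qed
  have "(deriv ^^ s) (\<lambda>t. \<Sum>i\<in>I. xi i / sqrt (eps i * (t - al i))) t = g s t"
    using \<open>open S\<close> \<open>t \<in> S\<close> g_0 g_deriv by (rule higher_deriv_eq_on_open)
  also have "\<dots> = pochhammer (1/2) s * (\<Sum>i\<in>I. xi i / sqrt (eps i * (t - al i)) * (- 1 / (t - al i)) ^ s)"
    unfolding g_def sum_distrib_left
  proof (intro sum.cong refl)
    fix i assume "i \<in> I"
    define D where "D = eps i * (t - al i)"
    have "D > 0"
      using pos \<open>i \<in> I\<close> by (simp add: D_def)
    then have "eps i / D = 1 / (t - al i)"
      by (cases "eps i = 0") (auto simp: D_def)
    then have geometric: "(- 1 / (t - al i)) ^ s = (-1) ^ s * eps i ^ s / D ^ s"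
      by (simp add: power_divide[symmetric] power_mult_distrib[symmetric])
    have "D powr (- (1/2) - real s) = 1 / sqrt D / D ^ s"
      using \<open>D > 0\<close> by (simp add: powr_diff powr_minus_divide powr_half_sqrt powr_realpow)
    then show "xi i * ((-1) ^ s * pochhammer (1/2) s * eps i ^ s) * D powr (- (1/2) - real s)
        = pochhammer (1/2) s * (xi i / sqrt D * (- 1 / (t - al i)) ^ s)"
      unfolding geometric by simp
  qed
  finally show ?thesis .
qed

lemma bcoef_prod_linear_sum_inverse_sqrt:
  fixes al eps xi :: "nat \<Rightarrow> real"
  assumes "finite I" and pos: "\<forall>i\<in>I. 0 < eps i * (a - al i)" and "1 \<le> m"
  shows "bcoef (\<Prod>i\<in>I. [:- al i, 1:]) (\<lambda>t. \<Sum>i\<in>I. xi i / sqrt (eps i * (t - al i))) m a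
       = - (\<Sum>i\<in>I. xi i / sqrt (eps i * (a - al i))
                     * coeff ((\<Prod>l\<in>I - {i}. [:- al l, 1:]) \<circ>\<^sub>p [:a, 1:]) (m - 1))"
proof -
  define F where "F = (\<Prod>i\<in>I. [:- al i, 1 :: real:])"
  define w where "w i = xi i / sqrt (eps i * (a - al i))" for i
  define G where "G i = (\<Prod>l\<in>I - {i}. [:- al l, 1 :: real:]) \<circ>\<^sub>p [:a, 1:]" for i
  have F_shift: "F \<circ>\<^sub>p [:a, 1:] = [:a - al i, 1:] * G i" if "i \<in> I" for i
  proof -
    have "F = [:- al i, 1:] * (\<Prod>l\<in>I - {i}. [:- al l, 1:])"
      unfolding F_def using \<open>finite I\<close> that by (rule prod.remove)
    moreover have "[:- al i, 1:] \<circ>\<^sub>p [:a, 1:] = [:a - al i, 1 :: real:]"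
      by (simp add: pcompose_pCons)
    ultimately show ?thesis
      unfolding G_def by (simp only: pcompose_mult)
  qed
  have "pochhammer (1/2 :: real) s \<noteq> 0" for s
    by (simp add: pochhammer_eq_0_iff)
  then have "bcoef F (\<lambda>t. \<Sum>i\<in>I. xi i / sqrt (eps i * (t - al i))) m a
      = (\<Sum>s=1..m. coeff (F \<circ>\<^sub>p [:a, 1:]) (m - s) * (\<Sum>i\<in>I. w i * (- 1 / (a - al i)) ^ s))"
    unfolding bcoef_def higher_deriv_sum_inverse_sqrt[OF \<open>finite I\<close> pos] coeff_pcompose_linear w_def
    by simp
  also have "\<dots> = (\<Sum>i\<in>I. w i * (\<Sum>s=1..m. coeff (F \<circ>\<^sub>p [:a, 1:]) (m - s) * (- 1 / (a - al i)) ^ s))"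
    by (simp add: sum_distrib_left mult_ac sum.swap[of _ I])
  also have "\<dots> = (\<Sum>i\<in>I. w i * - coeff (G i) (m - 1))"
  proof (intro sum.cong refl)
    fix i assume "i \<in> I"
    then have ne: "a - al i \<noteq> 0"
      using pos by force
    show "w i * (\<Sum>s=1..m. coeff (F \<circ>\<^sub>p [:a, 1:]) (m - s) * (- 1 / (a - al i)) ^ s)
        = w i * - coeff (G i) (m - 1)"
      unfolding F_shift[OF \<open>i \<in> I\<close>] sum_coeff_linear_mult_inverse_powers[OF ne \<open>1 \<le> m\<close>] ..
  qed
  finally show ?thesis
    by (simp add: F_def w_def G_def sum_negf)
qed

lemma btilde_prod_linear_sum_inverse_sqrt:
  fixes al eps xi :: "nat \<Rightarrow> real"
  assumes pos: "\<forall>i\<in>{1..n}. 0 < eps i * (a - al i)" and k: "k \<in> {1..n}"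
  shows "btilde n (\<Prod>i\<in>{1..n}. [:- al i, 1:]) (\<lambda>t. \<Sum>i=1..n. xi i / sqrt (eps i * (t - al i))) k a
       = (-1) ^ k * (\<Sum>i=1..n. xi i / sqrt (eps i * (a - al i)) * sigma n al i (k - 1))"
proof -
  define w where "w i = xi i / sqrt (eps i * (a - al i))" for i
  define G where "G i = (\<Prod>l\<in>{1..n} - {i}. [:- al l, 1 :: real:])" for i
  have deg_G: "degree (G i) \<le> n - 1" if "i \<in> {1..n}" for i
  proof -
    have "degree (G i) \<le> sum (degree \<circ> (\<lambda>l. [:- al l, 1 :: real:])) ({1..n} - {i})"
      unfolding G_def by (rule degree_prod_sum_le) simp
    also have "\<dots> = n - 1"
      using that by simp
    finally show ?thesis .
  qed
  have bcoef_eq: "bcoef (\<Prod>i\<in>{1..n}. [:- al i, 1:]) (\<lambda>t. \<Sum>i=1..n. xi i / sqrt (eps i * (t - al i))) (n - s + 1) a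
      = - (\<Sum>i=1..n. w i * coeff (G i \<circ>\<^sub>p [:a, 1:]) (n - s))" for s
    using bcoef_prod_linear_sum_inverse_sqrt[OF _ pos, of "n - s + 1" xi] by (simp add: w_def G_def)
  have "btilde n (\<Prod>i\<in>{1..n}. [:- al i, 1:]) (\<lambda>t. \<Sum>i=1..n. xi i / sqrt (eps i * (t - al i))) k a
      = (\<Sum>s=1..k. of_nat ((n - s) choose (k - s)) * (- a) ^ (k - s)
           * - (\<Sum>i=1..n. w i * coeff (G i \<circ>\<^sub>p [:a, 1:]) (n - s)))"
    unfolding btilde_def bcoef_eq ..
  also have "\<dots> = - (\<Sum>i=1..n. w i * (\<Sum>s=1..k. of_nat ((n - s) choose (k - s)) * (- a) ^ (k - s)
                                           * coeff (G i \<circ>\<^sub>p [:a, 1:]) (n - s)))"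
    by (simp add: sum_distrib_left mult_ac sum_negf, rule sum.swap)
  also have "\<dots> = - (\<Sum>i=1..n. w i * coeff (G i) (n - k))"
  proof -
    have "(\<Sum>s=1..k. of_nat ((n - s) choose (k - s)) * (- a) ^ (k - s) * coeff (G i \<circ>\<^sub>p [:a, 1:]) (n - s))
        = coeff (G i) (n - k)" if "i \<in> {1..n}" for i
      using coeff_eq_sum_coeff_pcompose_linear[OF deg_G[OF that]] k by simp
    then show ?thesis
      by simp
  qed
  also have "\<dots> = (-1) ^ k * (\<Sum>i=1..n. w i * sigma n al i (k - 1))"
  proof -
    obtain j where j: "k = Suc j"
      using k by (cases k) auto
    have "k - 1 \<le> n - 1" "n - 1 - (k - 1) = n - k"
      using k by auto
    then have "sigma n al i (k - 1) = (-1) ^ (k - 1) * coeff (G i) (n - k)" for i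
      unfolding sigma_def G_def by simp
    then show ?thesis
      unfolding j by (simp add: sum_distrib_left sum_negf mult_ac)
  qed
  finally show ?thesis
    by (simp add: w_def)
qed

theorem proposition9:
  shows
   "(\<forall>(n::nat) (F::real poly) (x::real \<Rightarrow> real) (S::real set) (a::real) (Pi::real) (Py::real).
       n \<ge> 2 \<and> degree F = n \<and> lead_coeff F = 1 \<and> open S \<and> a \<in> S \<and>
       (\<forall>j. \<forall>t\<in>S. (deriv ^^ j) x differentiable (at t)) \<longrightarrow>
       (\<Sum>k=1..n. bcoef F x k a * Pi ^ (2*k - 1) * Py ^ (2*(n - k) + 1))
       = (\<Sum>k=1..n. btilde n F x k a * (Pi\<^sup>2 + a * Py\<^sup>2) ^ (n - k) * Pi * Py ^ (2*k - 1)))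
    \<and>
    (\<forall>(n::nat) (al::nat \<Rightarrow> real) (eps::nat \<Rightarrow> real) (xi::nat \<Rightarrow> real) (a::real) k.
       n \<ge> 2 \<and> inj_on al {1..n} \<and> (\<forall>i\<in>{1..n}. eps i = 1 \<or> eps i = -1) \<and>
       (\<forall>i\<in>{1..n}. eps i * (a - al i) > 0) \<and> k \<in> {1..n} \<longrightarrow>
       btilde n (\<Prod>i\<in>{1..n}. [:- al i, 1:])
              (\<lambda>t. \<Sum>i=1..n. xi i / sqrt (eps i * (t - al i))) k a
       = (-1) ^ k * (\<Sum>i=1..n. xi i / sqrt (eps i * (a - al i)) * sigma n al i (k - 1)))"
  apply (intro conjI allI impI)
  subgoal
    unfolding btilde_def by (rule sum_odd_powers_eq_sum_shifted_square_powers)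
  subgoal
    by (rule btilde_prod_linear_sum_inverse_sqrt) auto
  done

end
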